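(* Let $\mathcal{H}$ be a Hilbert space of dimension $d$ with $2\le d<\infty$, let $X$ be a set with $d^2$ elements, and let $\mathbf{U}=\{U_x:x\in X\}$ and $\mathbf{U}'=\{U'_x:x\in X\}$ be unitary bases for $\mathcal{H}$. Then the following are equivalent: (i) $\mathbf{U}$ is phase-equivalent to $\mathbf{U}'$; (ii) for some $\mathbf{U}$-associated tag $(x_0,U_{x_0},\mathbf{W})$ and some $\mathbf{U}'$-associated tag $(x_0',U'_{x_0'},\mathbf{W}')$, $\mathbf{W}$ is phase-collectively-unitarily equivalent to $\mathbf{W}'$; (iii) for each $\mathbf{U}$-associated tag $(x_0,U_{x_0},\mathbf{W})$ there is a $\mathbf{U}'$-associated tag $(x_0',U'_{x_0'},\mathbf{W}')$ such that $\mathbf{W}$ is phase-collectively-unitarily equivalent to $\mathbf{W}'$; (iv) $\mathbf{U}$ and $\mathbf{U}'$ have the same fan systems to within phase-collective-unitary equivalence.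
   Context: $S^1$ is the unit circle in $\mathbb{C}$. A unitary basis is a family $\mathbf{U}=\{U_x:x\in X\}$ of unitaries on $\mathcal{H}$ with $\operatorname{tr}(U_x^*U_y)=d\,\delta_{xy}$. Unitary bases $\mathbf{U},\mathbf{U}'$ are equivalent if there are unitaries $V_1,V_2$ and a bijection $x\mapsto x'$ of $X$ with $U'_{x'}=V_1U_xV_2$ for all $x$; they are phase-equivalent if there is a function $f:X\to S^1$ such that $\{f(x)U'_x:x\in X\}$ is equivalent to $\{U_x:x\in X\}$. For $x_0\in X$, the $\mathbf{U}$-associated tag at $x_0$ is $(x_0,U_{x_0},\mathbf{W})$ with $\mathbf{W}=\{U_{x_0}^*U_x: x\in X, x\ne x_0\}$; this $\mathbf{W}$ is a unitary system, i.e. a set of unitaries $W_y$ with $\operatorname{tr}W_y=0$ and $\operatorname{tr}(W_x^*W_y)=d\delta_{xy}$. For sets $\mathcal{F},\mathcal{G}$ of operators: $\mathcal{F}$ is collectively unitarily equivalent (CUE) to $\mathcal{G}$ (via $V$) if there is a unitary $V$ with $\mathcal{G}=\{V^*AV:A\in\mathcal{F}\}$; $\mathcal{F}$ is phase-collectively-unitarily equivalent (PCUE) to $\mathcal{G}$ if there is a function $f:\mathcal{F}\to S^1$ with $\{f(A)A:A\in\mathcal{F}\}$ CUE $\mathcal{G}$. A $\mathbf{W}$-MASS is a subset of $\mathbf{W}$ consisting of pairwise commuting elements and maximal with this property; the fan representation $\mathcal{V}_{\mathbf{W}}$ of $\mathbf{W}$ is the family of all $\mathbf{W}$-MASS's (whose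 union is $\mathbf{W}$). The fan system of $\mathbf{U}$ is $\{\mathcal{V}_{\mathbf{W}} : (x_0,U_{x_0},\mathbf{W})$ is the $\mathbf{U}$-associated tag at $x_0$, $x_0\in X\}$. Two fans $\{\mathbf{V}_\alpha:\alpha\in\Lambda\}$ (of $\mathbf{W}$) and $\{\mathbf{V}'_\beta:\beta\in\Lambda'\}$ (of $\mathbf{W}'$) are PCUE if there exist a unitary $V$, a function $h:\mathbf{W}\to S^1$ and a bijection $\alpha\mapsto\alpha'$ of $\Lambda$ onto $\Lambda'$ with $\{h(A)A: A\in\mathbf{V}_\alpha\}$ CUE $\mathbf{V}'_{\alpha'}$ via $V$ for every $\alpha$; two fan systems are the same to within PCUE if every fan in either is PCUE to some fan in the other. *)

theory Defs
  imports "HOL-Analysis.Analysis"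
begin

text \<open>Operators on a d-dimensional Hilbert space are complex d x d matrices,
  with d = CARD('n).\<close>

type_synonym 'n cmat = "complex ^ 'n ^ 'n"

definition adj :: "'n::finite cmat \<Rightarrow> 'n cmat" where
  "adj A = transpose (map_matrix cnj A)"

definition cscale :: "complex \<Rightarrow> 'n::finite cmat \<Rightarrow> 'n cmat" where
  "cscale c A = (\<chi> i j. c * A $ i $ j)"

definition unitary_mat :: "'n::finite cmat \<Rightarrow> bool" where
  "unitary_mat U \<longleftrightarrow> adj U ** U = mat 1 \<and> U ** adj U = mat 1"

definition unitary_basis :: "'x set \<Rightarrow> ('x \<Rightarrow> 'n::finite cmat) \<Rightarrow> bool" where
  "unitary_basis X U \<longleftrightarrow>
     (\<forall>x\<in>X. unitary_mat (U x)) \<and>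
     (\<forall>x\<in>X. \<forall>y\<in>X. trace (adj (U x) ** U y) = (if x = y then of_nat CARD('n) else 0))"

definition ub_equivalent :: "'x set \<Rightarrow> ('x \<Rightarrow> 'n::finite cmat) \<Rightarrow> ('x \<Rightarrow> 'n cmat) \<Rightarrow> bool" where
  "ub_equivalent X U U' \<longleftrightarrow>
     (\<exists>V1 V2 \<sigma>. unitary_mat V1 \<and> unitary_mat V2 \<and> bij_betw \<sigma> X X \<and>
        (\<forall>x\<in>X. U' (\<sigma> x) = V1 ** U x ** V2))"

definition phase_equivalent :: "'x set \<Rightarrow> ('x \<Rightarrow> 'n::finite cmat) \<Rightarrow> ('x \<Rightarrow> 'n cmat) \<Rightarrow> bool" where
  "phase_equivalent X U U' \<longleftrightarrow>
     (\<exists>f. (\<forall>x\<in>X. cmod (f x) = 1) \<and> ub_equivalent X (\<lambda>x. cscale (f x) (U' x)) U)"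

text \<open>The unitary system W of the U-associated tag at x0.\<close>
definition tag_system :: "'x set \<Rightarrow> ('x \<Rightarrow> 'n::finite cmat) \<Rightarrow> 'x \<Rightarrow> 'n cmat set" where
  "tag_system X U x0 = {adj (U x0) ** U x | x. x \<in> X \<and> x \<noteq> x0}"

definition CUE_via :: "'n::finite cmat \<Rightarrow> 'n cmat set \<Rightarrow> 'n cmat set \<Rightarrow> bool" where
  "CUE_via V F G \<longleftrightarrow> unitary_mat V \<and> G = (\<lambda>A. adj V ** A ** V) ` F"

definition CUE :: "'n::finite cmat set \<Rightarrow> 'n cmat set \<Rightarrow> bool" where
  "CUE F G \<longleftrightarrow> (\<exists>V. CUE_via V F G)"

definition PCUE :: "'n::finite cmat set \<Rightarrow> 'n cmat set \<Rightarrow> bool" where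
  "PCUE F G \<longleftrightarrow> (\<exists>f. (\<forall>A\<in>F. cmod (f A) = 1) \<and> CUE ((\<lambda>A. cscale (f A) A) ` F) G)"

definition is_MASS :: "'n::finite cmat set \<Rightarrow> 'n cmat set \<Rightarrow> bool" where
  "is_MASS W S \<longleftrightarrow> S \<subseteq> W \<and> (\<forall>A\<in>S. \<forall>B\<in>S. A ** B = B ** A) \<and>
     (\<forall>T. S \<subseteq> T \<and> T \<subseteq> W \<and> (\<forall>A\<in>T. \<forall>B\<in>T. A ** B = B ** A) \<longrightarrow> T = S)"

definition fan :: "'n::finite cmat set \<Rightarrow> 'n cmat set set" where
  "fan W = {S. is_MASS W S}"

text \<open>PCUE of fans, a fan being the family of all MASSes of its unitary system
  (whose union is that system).\<close>
definition fan_PCUE :: "'n::finite cmat set set \<Rightarrow> 'n cmat set set \<Rightarrow> bool" where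
  "fan_PCUE F F' \<longleftrightarrow>
     (\<exists>V h \<beta>. (\<forall>A\<in>\<Union>F. cmod (h A) = 1) \<and> bij_betw \<beta> F F' \<and>
        (\<forall>S\<in>F. CUE_via V ((\<lambda>A. cscale (h A) A) ` S) (\<beta> S)))"

definition fan_system :: "'x set \<Rightarrow> ('x \<Rightarrow> 'n::finite cmat) \<Rightarrow> 'n cmat set set set" where
  "fan_system X U = (\<lambda>x0. fan (tag_system X U x0)) ` X"

definition same_fan_systems_PCUE :: "'n::finite cmat set set set \<Rightarrow> 'n cmat set set set \<Rightarrow> bool" where
  "same_fan_systems_PCUE FS FS' \<longleftrightarrow>
     (\<forall>F\<in>FS. \<exists>F'\<in>FS'. fan_PCUE F F') \<and> (\<forall>F'\<in>FS'. \<exists>F\<in>FS. fan_PCUE F' F)"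

end

theory Submission
  imports Defs
begin

text \<open>The tag at x0 consists of the W_x = U(x0)* U(x), x \<noteq> x0, and trace orthogonality of
  the basis shows that no two of them are proportional. Hence a PCUE {c_x V* W_x V} of the tag at
  x0 onto the tag at x0' matches the indices bijectively, x \<mapsto> \<tau> x, and multiplying back by
  U'(x0') gives U'(\<tau> x) = (U'(x0') V* U(x0)*) (c_x U(x)) V, a phase equivalence. Conversely a
  phase equivalence U'(\<tau> x) = P (g_x U(x)) Q is a PCUE via Q of the tag at x0 onto the tag at
  \<tau> x0, for every x0. Conjugation by a unitary combined with nonzero rescaling preserves and
  reflects commutation, so such a PCUE carries MASSes to MASSes bijectively; conversely a PCUE of
  the fans is already a PCUE of the tags, since the MASSes cover the tag.\<close>

section \<open>Matrix algebra\<close>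

lemma adj_nth [simp]: "adj A $ i $ j = cnj (A $ j $ i)"
  by (simp add: adj_def transpose_def)

lemma cscale_nth [simp]: "cscale c A $ i $ j = c * A $ i $ j"
  by (simp add: cscale_def)

lemma adj_mult: "adj (A ** B) = adj B ** (adj A :: 'n::finite cmat)"
  by (simp add: vec_eq_iff matrix_matrix_mult_def mult.commute)

lemma adj_adj [simp]: "adj (adj A) = A"
  by (simp add: vec_eq_iff)

lemma adj_cscale: "adj (cscale c A) = cscale (cnj c) (adj A)"
  by (simp add: vec_eq_iff)

lemma cscale_mult_left: "cscale c A ** B = cscale c (A ** (B :: 'n::finite cmat))"
  by (simp add: vec_eq_iff matrix_matrix_mult_def sum_distrib_left mult.assoc)

lemma cscale_mult_right: "A ** cscale c B = cscale c (A ** (B :: 'n::finite cmat))"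
  by (simp add: vec_eq_iff matrix_matrix_mult_def sum_distrib_left algebra_simps)

lemma cscale_cscale: "cscale c (cscale c' A) = cscale (c * c') A"
  by (simp add: vec_eq_iff mult.assoc)

lemma cscale_1 [simp]: "cscale 1 A = A"
  by (simp add: vec_eq_iff)

lemma cscale_cancel: "c \<noteq> 0 \<Longrightarrow> cscale c A = cscale c B \<Longrightarrow> A = B"
  by (simp add: vec_eq_iff)

lemma trace_cscale: "trace (cscale c (A :: 'n::finite cmat)) = c * trace A"
  by (simp add: trace_def sum_distrib_left)

lemma cnj_mult_self_norm_1: "cmod c = 1 \<Longrightarrow> cnj c * c = 1"
  by (metis complex_norm_square mult.commute of_real_1 power_one)

lemma unitary_mat_adj: "unitary_mat V \<Longrightarrow> unitary_mat (adj V)"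
  by (simp add: unitary_mat_def)

lemma unitary_mat_mult: "unitary_mat P \<Longrightarrow> unitary_mat Q \<Longrightarrow> unitary_mat (P ** Q)"
  unfolding unitary_mat_def adj_mult by (metis matrix_mul_assoc matrix_mul_lid)

lemma unitary_mat_simps:
  assumes "unitary_mat V"
  shows "adj V ** V = mat 1" "V ** adj V = mat 1"
    "A ** adj V ** V = A" "A ** V ** adj V = A"
  using assms unfolding unitary_mat_def by (metis matrix_mul_assoc matrix_mul_rid)+

lemma unitary_conj_cancel:
  assumes "unitary_mat V" "adj V ** A ** V = adj V ** B ** V"
  shows "A = B"
proof -
  have "V ** (adj V ** A ** V) ** adj V = V ** (adj V ** B ** V) ** adj V"
    using assms(2) by simp
  then show ?thesis
    by (simp add: matrix_mul_assoc unitary_mat_simps[OF assms(1)])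
qed

lemma unitary_conj_mult:
  assumes "unitary_mat (V :: 'n::finite cmat)"
  shows "(adj V ** cscale a A ** V) ** (adj V ** cscale b B ** V)
       = adj V ** cscale (a * b) (A ** B) ** V"
  by (simp add: matrix_mul_assoc cscale_mult_left cscale_mult_right cscale_cscale
      unitary_mat_simps[OF assms] mult.commute)

lemma unitary_sandwich_adj_mult:
  assumes "unitary_mat (P :: 'n::finite cmat)"
  shows "adj (P ** cscale a A ** Q) ** (P ** cscale b B ** Q)
       = adj Q ** cscale (cnj a * b) (adj A ** B) ** Q"
  by (simp add: adj_mult adj_cscale matrix_mul_assoc cscale_mult_left cscale_mult_right
      cscale_cscale unitary_mat_simps[OF assms] mult.commute)

lemma unitary_sandwich_inverse:
  assumes P: "unitary_mat (P :: 'n::finite cmat)" and Q: "unitary_mat Q" and a: "cmod a = 1"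
    and B: "B = P ** cscale a A ** Q"
  shows "A = adj P ** cscale (cnj a) B ** adj Q"
  unfolding B using cnj_mult_self_norm_1[OF a]
  by (simp add: matrix_mul_assoc cscale_mult_left cscale_mult_right cscale_cscale
      unitary_mat_simps[OF P] unitary_mat_simps[OF Q])

section \<open>Phase collective unitary equivalence\<close>

definition phase_distinct :: "'n::finite cmat set \<Rightarrow> bool" where
  "phase_distinct W \<longleftrightarrow>
     (\<forall>A\<in>W. \<forall>B\<in>W. \<forall>a b. a \<noteq> 0 \<longrightarrow> b \<noteq> 0 \<longrightarrow> cscale a A = cscale b B \<longrightarrow> A = B)"

lemma PCUE_imageI:
  assumes "inj_on T I" and "\<forall>i\<in>I. cmod (c i) = 1" and "unitary_mat V"
    and "\<forall>i\<in>I. T' i = adj V ** cscale (c i) (T i) ** V"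
  shows "PCUE (T ` I) (T' ` I)"
  unfolding PCUE_def CUE_def CUE_via_def
proof (intro exI conjI)
  show "\<forall>A\<in>T ` I. cmod (c (inv_into I T A)) = 1"
    using assms(1,2) by auto
  show "T' ` I = (\<lambda>A. adj V ** A ** V) ` (\<lambda>A. cscale (c (inv_into I T A)) A) ` T ` I"
    unfolding image_image using assms(1,4) by (auto intro!: image_cong)
qed fact

lemma PCUE_obtain_bij:
  assumes "phase_distinct W" and "PCUE W W'"
  obtains V f where "unitary_mat V" and "\<forall>A\<in>W. cmod (f A) = 1"
    and "bij_betw (\<lambda>A. adj V ** cscale (f A) A ** V) W W'"
proof -
  from assms(2) obtain f V where f: "\<forall>A\<in>W. cmod (f A) = 1" and V: "unitary_mat V"
    and W': "W' = (\<lambda>A. adj V ** A ** V) ` (\<lambda>A. cscale (f A) A) ` W"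
    unfolding PCUE_def CUE_def CUE_via_def by blast
  have "inj_on (\<lambda>A. adj V ** cscale (f A) A ** V) W"
  proof (rule inj_onI)
    fix A B assume AB: "A \<in> W" "B \<in> W"
      and "adj V ** cscale (f A) A ** V = adj V ** cscale (f B) B ** V"
    then have "cscale (f A) A = cscale (f B) B"
      using unitary_conj_cancel[OF V] by blast
    moreover have "f A \<noteq> 0" "f B \<noteq> 0"
      using f AB by fastforce+
    ultimately show "A = B"
      using assms(1) AB unfolding phase_distinct_def by blast
  qed
  with W' have "bij_betw (\<lambda>A. adj V ** cscale (f A) A ** V) W W'"
    by (simp add: bij_betw_def image_image)
  with V f show thesis by (rule that)
qed

section \<open>Tag systems of a unitary basis\<close>

lemma tag_system_eq_image: "tag_system X U x0 = (\<lambda>x. adj (U x0) ** U x) ` (X - {x0})"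
  unfolding tag_system_def by auto

lemma tag_system_finite: "finite X \<Longrightarrow> finite (tag_system X U x0)"
  unfolding tag_system_eq_image by simp

lemma unitary_basis_unitary: "unitary_basis X U \<Longrightarrow> x \<in> X \<Longrightarrow> unitary_mat (U x)"
  by (simp add: unitary_basis_def)

lemma unitary_adj_mult_cancel:
  assumes "unitary_mat (W :: 'n::finite cmat)"
  shows "adj (adj W ** A) ** (adj W ** B) = adj A ** B"
  by (simp add: adj_mult matrix_mul_assoc unitary_mat_simps[OF assms])

lemma tag_scaled_eq_imp_eq:
  fixes U :: "'x \<Rightarrow> 'n::finite cmat"
  assumes ub: "unitary_basis X U" and X: "x0 \<in> X" "x \<in> X" "y \<in> X"
    and ab: "a \<noteq> 0" "b \<noteq> 0"
    and eq: "cscale a (adj (U x0) ** U x) = cscale b (adj (U x0) ** U y)"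
  shows "x = y"
proof (rule ccontr)
  assume "x \<noteq> y"
  have u0: "unitary_mat (U x0)"
    using ub X(1) by (rule unitary_basis_unitary)
  let ?T = "\<lambda>z. adj (U x0) ** U z"
  have "a * trace (adj (U y) ** U x) = trace (adj (?T y) ** cscale a (?T x))"
    by (simp add: cscale_mult_right trace_cscale unitary_adj_mult_cancel[OF u0])
  also have "\<dots> = trace (adj (?T y) ** cscale b (?T y))"
    by (simp only: eq)
  also have "\<dots> = b * trace (adj (U y) ** U y)"
    by (simp add: cscale_mult_right trace_cscale unitary_adj_mult_cancel[OF u0])
  finally have "a * trace (adj (U y) ** U x) = b * trace (adj (U y) ** U y)" .
  moreover have "trace (adj (U y) ** U x) = 0" "trace (adj (U y) ** U y) = of_nat CARD('n)"
    using ub X \<open>x \<noteq> y\<close> by (simp_all add: unitary_basis_def)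
  ultimately show False
    using ab by simp
qed

lemma inj_on_tag:
  "unitary_basis X U \<Longrightarrow> x0 \<in> X \<Longrightarrow> inj_on (\<lambda>x. adj (U x0) ** U x) X"
  using tag_scaled_eq_imp_eq[of X U x0 _ _ 1 1] by (auto simp: inj_on_def)

lemma phase_distinct_tag_system:
  assumes "unitary_basis X U" and "x0 \<in> X"
  shows "phase_distinct (tag_system X U x0)"
  unfolding phase_distinct_def
proof (intro ballI allI impI)
  fix A B a b
  assume "A \<in> tag_system X U x0" "B \<in> tag_system X U x0"
  then obtain x y where "x \<in> X" "y \<in> X" "A = adj (U x0) ** U x" "B = adj (U x0) ** U y"
    by (auto simp: tag_system_def)
  moreover assume "a \<noteq> 0" "b \<noteq> 0" "cscale a A = cscale b B"
  ultimately show "A = B"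
    using tag_scaled_eq_imp_eq[OF assms] by metis
qed

section \<open>Phase equivalence and tags\<close>

lemma phase_equivalent_sym:
  assumes "phase_equivalent X U U'"
  shows "phase_equivalent X U' U"
proof -
  from assms obtain f V1 V2 \<sigma> where f: "\<forall>x\<in>X. cmod (f x) = 1"
    and V1: "unitary_mat V1" and V2: "unitary_mat V2" and \<sigma>: "bij_betw \<sigma> X X"
    and eq: "\<forall>x\<in>X. U (\<sigma> x) = V1 ** cscale (f x) (U' x) ** V2"
    unfolding phase_equivalent_def ub_equivalent_def by blast
  define \<tau> where "\<tau> = inv_into X \<sigma>"
  have \<tau>: "bij_betw \<tau> X X"
    unfolding \<tau>_def using \<sigma> by (rule bij_betw_inv_into)
  have "\<forall>y\<in>X. U' (\<tau> y) = adj V1 ** cscale (cnj (f (\<tau> y))) (U y) ** adj V2"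
  proof
    fix y assume "y \<in> X"
    then have "\<tau> y \<in> X" "\<sigma> (\<tau> y) = y"
      using \<tau> \<sigma> by (simp_all add: \<tau>_def bij_betw_apply bij_betw_inv_into_right)
    with f eq show "U' (\<tau> y) = adj V1 ** cscale (cnj (f (\<tau> y))) (U y) ** adj V2"
      by (intro unitary_sandwich_inverse[OF V1 V2]) auto
  qed
  then have "ub_equivalent X (\<lambda>y. cscale (cnj (f (\<tau> y))) (U y)) U'"
    unfolding ub_equivalent_def using V1 V2 \<tau> unitary_mat_adj by blast
  moreover have "\<forall>y\<in>X. cmod (cnj (f (\<tau> y))) = 1"
    using f \<tau> by (simp add: bij_betw_apply)
  ultimately show ?thesis
    unfolding phase_equivalent_def by (intro exI[of _ "\<lambda>y. cnj (f (\<tau> y))"] conjI) simp_all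
qed

lemma phase_equivalent_imp_tag_PCUE:
  fixes U U' :: "'x \<Rightarrow> 'n::finite cmat"
  assumes ub: "unitary_basis X U" and pe: "phase_equivalent X U' U"
  shows "\<forall>x0\<in>X. \<exists>x0'\<in>X. PCUE (tag_system X U x0) (tag_system X U' x0')"
proof -
  from pe obtain g P Q \<tau> where g: "\<forall>x\<in>X. cmod (g x) = 1"
    and P: "unitary_mat P" and Q: "unitary_mat Q" and \<tau>: "bij_betw \<tau> X X"
    and eq: "\<forall>x\<in>X. U' (\<tau> x) = P ** cscale (g x) (U x) ** Q"
    unfolding phase_equivalent_def ub_equivalent_def by blast
  have "PCUE (tag_system X U x0) (tag_system X U' (\<tau> x0))" if x0: "x0 \<in> X" for x0
  proof -
    have "X - {\<tau> x0} = \<tau> ` (X - {x0})"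
      using inj_on_image_set_diff[of \<tau> X X "{x0}"] \<tau> x0 by (simp add: bij_betw_def)
    then have tag': "tag_system X U' (\<tau> x0) = (\<lambda>x. adj (U' (\<tau> x0)) ** U' (\<tau> x)) ` (X - {x0})"
      by (simp add: tag_system_eq_image image_image)
    show ?thesis
      unfolding tag_system_eq_image[of X U] tag'
    proof (rule PCUE_imageI[where c = "\<lambda>x. cnj (g x0) * g x" and V = Q])
      show "inj_on (\<lambda>x. adj (U x0) ** U x) (X - {x0})"
        using inj_on_tag[OF ub x0] by (rule inj_on_subset) auto
      show "\<forall>x\<in>X - {x0}. cmod (cnj (g x0) * g x) = 1"
        using g x0 by (simp add: norm_mult)
      show "\<forall>x\<in>X - {x0}. adj (U' (\<tau> x0)) ** U' (\<tau> x)
          = adj Q ** cscale (cnj (g x0) * g x) (adj (U x0) ** U x) ** Q"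
        using eq x0 by (simp add: unitary_sandwich_adj_mult[OF P])
    qed fact
  qed
  then show ?thesis
    using \<tau> by (meson bij_betw_apply)
qed

text \<open>The index bijection sends x0 to x0' and matches the remaining indices through the
  bijections of X - {x0} and X - {x0'} onto the two tag systems.\<close>

lemma tag_PCUE_obtain_index_bij:
  fixes U U' :: "'x \<Rightarrow> 'n::finite cmat"
  assumes ub: "unitary_basis X U" and ub': "unitary_basis X U'"
    and x0: "x0 \<in> X" and x0': "x0' \<in> X"
    and pc: "PCUE (tag_system X U x0) (tag_system X U' x0')"
  obtains V c \<tau> where "unitary_mat V" and "\<forall>x\<in>X. cmod (c x) = 1" and "bij_betw \<tau> X X"
    and "\<forall>x\<in>X. adj (U' x0') ** U' (\<tau> x) = adj V ** cscale (c x) (adj (U x0) ** U x) ** V"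
proof -
  obtain V f where V: "unitary_mat V" and f: "\<forall>A\<in>tag_system X U x0. cmod (f A) = 1"
    and \<phi>: "bij_betw (\<lambda>A. adj V ** cscale (f A) A ** V)
      (tag_system X U x0) (tag_system X U' x0')"
    using PCUE_obtain_bij[OF phase_distinct_tag_system[OF ub x0] pc] by blast
  define T where "T x = adj (U x0) ** U x" for x
  define T' where "T' x = adj (U' x0') ** U' x" for x
  define c where "c x = (if x = x0 then 1 else f (T x))" for x
  define \<tau> where
    "\<tau> x = (if x = x0 then x0' else inv_into (X - {x0'}) T' (adj V ** cscale (c x) (T x) ** V))" for x
  have T: "bij_betw T (X - {x0}) (tag_system X U x0)"
    unfolding T_def tag_system_eq_image
    by (intro bij_betw_imageI inj_on_subset[OF inj_on_tag[OF ub x0]]) auto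
  have T': "bij_betw T' (X - {x0'}) (tag_system X U' x0')"
    unfolding T'_def tag_system_eq_image
    by (intro bij_betw_imageI inj_on_subset[OF inj_on_tag[OF ub' x0']]) auto
  have "bij_betw (inv_into (X - {x0'}) T' \<circ> ((\<lambda>A. adj V ** cscale (f A) A ** V) \<circ> T))
      (X - {x0}) (X - {x0'})"
    by (rule bij_betw_trans[OF bij_betw_trans[OF T \<phi>] bij_betw_inv_into[OF T']])
  then have "bij_betw \<tau> (X - {x0}) (X - {x0'})"
    by (rule iffD1[OF bij_betw_cong, rotated]) (simp add: \<tau>_def c_def)
  moreover have "bij_betw \<tau> {x0} {x0'}"
    by (simp add: \<tau>_def)
  ultimately have \<tau>: "bij_betw \<tau> X X"
    using bij_betw_combine[of \<tau> "X - {x0}" "X - {x0'}" "{x0}" "{x0'}"] x0 x0'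
    by (simp add: insert_absorb)
  have c: "\<forall>x\<in>X. cmod (c x) = 1"
    using f unfolding c_def T_def tag_system_def by auto
  have "T' (\<tau> x) = adj V ** cscale (c x) (T x) ** V" if "x \<in> X" for x
  proof (cases "x = x0")
    case True
    have "unitary_mat (U x0)" "unitary_mat (U' x0')"
      using ub ub' x0 x0' by (simp_all add: unitary_basis_unitary)
    with True V show ?thesis
      by (simp add: \<tau>_def c_def T_def T'_def unitary_mat_simps)
  next
    case False
    then have "T x \<in> tag_system X U x0"
      using that T by (simp add: bij_betw_apply)
    then have "adj V ** cscale (c x) (T x) ** V \<in> tag_system X U' x0'"
      using bij_betw_apply[OF \<phi>] False by (simp add: c_def)
    with False T' show ?thesis
      by (simp add: \<tau>_def bij_betw_inv_into_right)
  qed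
  with V c \<tau> show thesis
    unfolding T_def T'_def by (intro that) auto
qed

lemma tag_PCUE_imp_phase_equivalent:
  fixes U U' :: "'x \<Rightarrow> 'n::finite cmat"
  assumes ub: "unitary_basis X U" and ub': "unitary_basis X U'"
    and x0: "x0 \<in> X" and x0': "x0' \<in> X"
    and pc: "PCUE (tag_system X U x0) (tag_system X U' x0')"
  shows "phase_equivalent X U' U"
proof -
  obtain V c \<tau> where V: "unitary_mat V" and c: "\<forall>x\<in>X. cmod (c x) = 1"
    and \<tau>: "bij_betw \<tau> X X"
    and rel: "\<forall>x\<in>X. adj (U' x0') ** U' (\<tau> x) = adj V ** cscale (c x) (adj (U x0) ** U x) ** V"
    using tag_PCUE_obtain_index_bij[OF assms] by blast
  have u0: "unitary_mat (U x0)" and u0': "unitary_mat (U' x0')"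
    using ub ub' x0 x0' by (simp_all add: unitary_basis_unitary)
  have "U' (\<tau> x) = (U' x0' ** adj V ** adj (U x0)) ** cscale (c x) (U x) ** V" if "x \<in> X" for x
  proof -
    have "U' (\<tau> x) = U' x0' ** (adj (U' x0') ** U' (\<tau> x))"
      by (simp add: matrix_mul_assoc unitary_mat_simps[OF u0'])
    also have "\<dots> = (U' x0' ** adj V ** adj (U x0)) ** cscale (c x) (U x) ** V"
      using rel that by (simp add: matrix_mul_assoc cscale_mult_left cscale_mult_right)
    finally show ?thesis .
  qed
  moreover have "unitary_mat (U' x0' ** adj V ** adj (U x0))"
    using u0' V u0 by (intro unitary_mat_mult unitary_mat_adj)
  ultimately have "ub_equivalent X (\<lambda>x. cscale (c x) (U x)) U'"
    unfolding ub_equivalent_def using V \<tau> by blast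
  with c show ?thesis
    unfolding phase_equivalent_def by blast
qed

section \<open>Fans\<close>

lemma is_MASS_image:
  assumes \<phi>: "bij_betw \<phi> W W'"
    and comm: "\<forall>A\<in>W. \<forall>B\<in>W. \<phi> A ** \<phi> B = \<phi> B ** \<phi> A \<longleftrightarrow> A ** B = B ** A"
    and S: "is_MASS W S"
  shows "is_MASS W' (\<phi> ` S)"
proof -
  from S have SW: "S \<subseteq> W" and cS: "\<forall>A\<in>S. \<forall>B\<in>S. A ** B = B ** A"
    and max: "\<And>T. S \<subseteq> T \<Longrightarrow> T \<subseteq> W \<Longrightarrow> (\<forall>A\<in>T. \<forall>B\<in>T. A ** B = B ** A) \<Longrightarrow> T = S"
    unfolding is_MASS_def by blast+
  show ?thesis
    unfolding is_MASS_def
  proof (intro conjI allI impI)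
    show "\<phi> ` S \<subseteq> W'"
      using SW \<phi> by (auto simp: bij_betw_def)
    show "\<forall>A\<in>\<phi> ` S. \<forall>B\<in>\<phi> ` S. A ** B = B ** A"
      using cS comm SW by blast
    fix T assume T: "\<phi> ` S \<subseteq> T \<and> T \<subseteq> W' \<and> (\<forall>A\<in>T. \<forall>B\<in>T. A ** B = B ** A)"
    have "W \<inter> \<phi> -` T = S"
    proof (rule max)
      show "S \<subseteq> W \<inter> \<phi> -` T" "W \<inter> \<phi> -` T \<subseteq> W"
        using T SW by blast+
      show "\<forall>A\<in>W \<inter> \<phi> -` T. \<forall>B\<in>W \<inter> \<phi> -` T. A ** B = B ** A"
        using T comm by blast
    qed
    moreover have "T = \<phi> ` (W \<inter> \<phi> -` T)"
      using T \<phi> by (auto simp: bij_betw_def)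
    ultimately show "T = \<phi> ` S"
      by simp
  qed
qed

text \<open>The inverse bijection satisfies the same hypotheses, so it maps MASSes back.\<close>

lemma bij_betw_fan_image:
  assumes \<phi>: "bij_betw \<phi> W W'"
    and comm: "\<forall>A\<in>W. \<forall>B\<in>W. \<phi> A ** \<phi> B = \<phi> B ** \<phi> A \<longleftrightarrow> A ** B = B ** A"
  shows "bij_betw (\<lambda>S. \<phi> ` S) (fan W) (fan W')"
proof -
  define \<psi> where "\<psi> = inv_into W \<phi>"
  have \<psi>: "bij_betw \<psi> W' W"
    unfolding \<psi>_def using \<phi> by (rule bij_betw_inv_into)
  have \<phi>\<psi>: "\<phi> (\<psi> A) = A" if "A \<in> W'" for A
    unfolding \<psi>_def using \<phi> that by (rule bij_betw_inv_into_right)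
  have comm': "\<forall>A\<in>W'. \<forall>B\<in>W'. \<psi> A ** \<psi> B = \<psi> B ** \<psi> A \<longleftrightarrow> A ** B = B ** A"
  proof (intro ballI)
    fix A B assume "A \<in> W'" "B \<in> W'"
    then show "\<psi> A ** \<psi> B = \<psi> B ** \<psi> A \<longleftrightarrow> A ** B = B ** A"
      using comm[rule_format, of "\<psi> A" "\<psi> B"] bij_betw_apply[OF \<psi>] \<phi>\<psi> by simp
  qed
  show ?thesis
  proof (rule bij_betw_imageI)
    show "inj_on (\<lambda>S. \<phi> ` S) (fan W)"
      using inj_on_image_eq_iff[OF bij_betw_imp_inj_on[OF \<phi>]]
      by (auto simp: inj_on_def fan_def is_MASS_def)
    show "(\<lambda>S. \<phi> ` S) ` fan W = fan W'"
    proof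
      show "(\<lambda>S. \<phi> ` S) ` fan W \<subseteq> fan W'"
        using is_MASS_image[OF \<phi> comm] by (auto simp: fan_def)
      show "fan W' \<subseteq> (\<lambda>S. \<phi> ` S) ` fan W"
      proof
        fix S' assume "S' \<in> fan W'"
        then have "\<psi> ` S' \<in> fan W" and "S' \<subseteq> W'"
          using is_MASS_image[OF \<psi> comm'] by (auto simp: fan_def is_MASS_def)
        moreover from \<open>S' \<subseteq> W'\<close> have "S' = \<phi> ` \<psi> ` S'"
          by (auto simp: image_image \<phi>\<psi> subset_iff)
        ultimately show "S' \<in> (\<lambda>S. \<phi> ` S) ` fan W"
          by blast
      qed
    qed
  qed
qed

lemma PCUE_imp_fan_PCUE:
  assumes "phase_distinct W" and "PCUE W W'"
  shows "fan_PCUE (fan W) (fan W')"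
proof -
  obtain V f where V: "unitary_mat V" and f: "\<forall>A\<in>W. cmod (f A) = 1"
    and \<phi>: "bij_betw (\<lambda>A. adj V ** cscale (f A) A ** V) W W'"
    using PCUE_obtain_bij[OF assms] by blast
  let ?\<phi> = "\<lambda>A. adj V ** cscale (f A) A ** V"
  have f_nonzero: "f A \<noteq> 0" if "A \<in> W" for A
    using f that by fastforce
  have comm: "\<forall>A\<in>W. \<forall>B\<in>W. ?\<phi> A ** ?\<phi> B = ?\<phi> B ** ?\<phi> A \<longleftrightarrow> A ** B = B ** A"
  proof (intro ballI)
    fix A B assume "A \<in> W" "B \<in> W"
    then have nonzero: "f A * f B \<noteq> 0"
      using f_nonzero by simp
    have "?\<phi> A ** ?\<phi> B = ?\<phi> B ** ?\<phi> A \<longleftrightarrow>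
        adj V ** cscale (f A * f B) (A ** B) ** V = adj V ** cscale (f A * f B) (B ** A) ** V"
      by (simp only: unitary_conj_mult[OF V] mult.commute[of "f B"])
    also have "\<dots> \<longleftrightarrow> A ** B = B ** A"
    proof
      assume "adj V ** cscale (f A * f B) (A ** B) ** V = adj V ** cscale (f A * f B) (B ** A) ** V"
      then show "A ** B = B ** A"
        by (rule cscale_cancel[OF nonzero unitary_conj_cancel[OF V]])
    qed simp
    finally show "?\<phi> A ** ?\<phi> B = ?\<phi> B ** ?\<phi> A \<longleftrightarrow> A ** B = B ** A" .
  qed
  have fans: "bij_betw (\<lambda>S. ?\<phi> ` S) (fan W) (fan W')"
    by (rule bij_betw_fan_image[OF \<phi> comm])
  show ?thesis
    unfolding fan_PCUE_def
  proof (intro exI conjI)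
    show "\<forall>A\<in>\<Union>(fan W). cmod (f A) = 1"
      using f by (auto simp: fan_def is_MASS_def)
    show "\<forall>S\<in>fan W. CUE_via V ((\<lambda>A. cscale (f A) A) ` S) (?\<phi> ` S)"
      unfolding CUE_via_def image_image using V by simp
  qed (rule fans)
qed

lemma is_MASS_extend:
  assumes fin: "finite W" and S0: "S0 \<subseteq> W" "\<forall>A\<in>S0. \<forall>B\<in>S0. A ** B = B ** A"
  shows "\<exists>S. is_MASS W S \<and> S0 \<subseteq> S"
proof -
  define C where "C = {T. S0 \<subseteq> T \<and> T \<subseteq> W \<and> (\<forall>A\<in>T. \<forall>B\<in>T. A ** B = B ** A)}"
  have "C \<subseteq> Pow W"
    by (auto simp: C_def)
  then have "finite C"
    using fin by (meson finite_Pow_iff finite_subset)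
  moreover have "S0 \<in> C"
    using S0 by (simp add: C_def)
  ultimately obtain S where S: "S \<in> C" and max: "\<forall>T\<in>C. S \<subseteq> T \<longrightarrow> S = T"
    using finite_has_maximal2[of C S0] by blast
  have "is_MASS W S"
    unfolding is_MASS_def
  proof (intro conjI allI impI)
    show "S \<subseteq> W" "\<forall>A\<in>S. \<forall>B\<in>S. A ** B = B ** A"
      using S by (simp_all add: C_def)
    fix T assume "S \<subseteq> T \<and> T \<subseteq> W \<and> (\<forall>A\<in>T. \<forall>B\<in>T. A ** B = B ** A)"
    moreover from this have "T \<in> C"
      using S by (auto simp: C_def)
    ultimately show "T = S"
      using max by blast
  qed
  with S show ?thesis
    by (auto simp: C_def)
qed

lemma Union_fan: "finite W \<Longrightarrow> \<Union>(fan W) = W"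
  using is_MASS_extend[of W "{_}"] by (fastforce simp: fan_def is_MASS_def)

lemma fan_nonempty: "finite W \<Longrightarrow> fan W \<noteq> {}"
  using is_MASS_extend[of W "{}"] by (auto simp: fan_def)

lemma fan_PCUE_imp_PCUE:
  assumes fin: "finite W" "finite W'" and fp: "fan_PCUE (fan W) (fan W')"
  shows "PCUE W W'"
proof -
  from fp obtain V h \<beta> where h: "\<forall>A\<in>\<Union>(fan W). cmod (h A) = 1"
    and \<beta>: "bij_betw \<beta> (fan W) (fan W')"
    and cue: "\<forall>S\<in>fan W. CUE_via V ((\<lambda>A. cscale (h A) A) ` S) (\<beta> S)"
    unfolding fan_PCUE_def by blast
  have V: "unitary_mat V"
    using cue fan_nonempty[OF fin(1)] by (auto simp: CUE_via_def)
  have "W' = \<Union>(\<beta> ` fan W)"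
    using \<beta> Union_fan[OF fin(2)] by (simp add: bij_betw_def)
  also have "\<dots> = \<Union>((\<lambda>S. (\<lambda>A. adj V ** A ** V) ` (\<lambda>A. cscale (h A) A) ` S) ` fan W)"
    using cue by (simp add: CUE_via_def)
  also have "\<dots> = (\<lambda>A. adj V ** A ** V) ` (\<lambda>A. cscale (h A) A) ` \<Union>(fan W)"
    by (simp add: image_Union image_image)
  also have "\<dots> = (\<lambda>A. adj V ** A ** V) ` (\<lambda>A. cscale (h A) A) ` W"
    by (simp only: Union_fan[OF fin(1)])
  finally show ?thesis
    unfolding PCUE_def CUE_def CUE_via_def using h V Union_fan[OF fin(1)] by blast
qed

lemma fan_PCUE_tag_iff:
  assumes "finite X" and "unitary_basis X U" and "x0 \<in> X"
  shows "fan_PCUE (fan (tag_system X U x0)) (fan (tag_system X U' x0'))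
     \<longleftrightarrow> PCUE (tag_system X U x0) (tag_system X U' x0')"
  using fan_PCUE_imp_PCUE[OF tag_system_finite[OF assms(1)] tag_system_finite[OF assms(1)]]
    PCUE_imp_fan_PCUE[OF phase_distinct_tag_system[OF assms(2,3)]] by (rule iffI)

lemma same_fan_systems_PCUE_iff:
  assumes "finite X" and "unitary_basis X U" and "unitary_basis X U'"
  shows "same_fan_systems_PCUE (fan_system X U) (fan_system X U') \<longleftrightarrow>
      (\<forall>x0\<in>X. \<exists>x0'\<in>X. PCUE (tag_system X U x0) (tag_system X U' x0')) \<and>
      (\<forall>x0'\<in>X. \<exists>x0\<in>X. PCUE (tag_system X U' x0') (tag_system X U x0))"
  using assms by (simp add: same_fan_systems_PCUE_def fan_system_def fan_PCUE_tag_iff)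

theorem theorem2p15:
  fixes X :: "'x set" and U U' :: "'x \<Rightarrow> complex ^ 'n::finite ^ 'n"
  assumes "CARD('n) \<ge> 2"
    and "finite X" and "card X = CARD('n) ^ 2"
    and "unitary_basis X U" and "unitary_basis X U'"
  shows "(phase_equivalent X U U' \<longleftrightarrow>
            (\<exists>x0\<in>X. \<exists>x0'\<in>X. PCUE (tag_system X U x0) (tag_system X U' x0')))
       \<and> ((\<exists>x0\<in>X. \<exists>x0'\<in>X. PCUE (tag_system X U x0) (tag_system X U' x0')) \<longleftrightarrow>
            (\<forall>x0\<in>X. \<exists>x0'\<in>X. PCUE (tag_system X U x0) (tag_system X U' x0')))
       \<and> ((\<forall>x0\<in>X. \<exists>x0'\<in>X. PCUE (tag_system X U x0) (tag_system X U' x0')) \<longleftrightarrow>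
            same_fan_systems_PCUE (fan_system X U) (fan_system X U'))"
proof -
  note ub = assms(4,5)
  define pe where "pe \<longleftrightarrow> phase_equivalent X U U'"
  define some_tag where
    "some_tag \<longleftrightarrow> (\<exists>x0\<in>X. \<exists>x0'\<in>X. PCUE (tag_system X U x0) (tag_system X U' x0'))"
  define all_tags where
    "all_tags \<longleftrightarrow> (\<forall>x0\<in>X. \<exists>x0'\<in>X. PCUE (tag_system X U x0) (tag_system X U' x0'))"
  define all_tags' where
    "all_tags' \<longleftrightarrow> (\<forall>x0'\<in>X. \<exists>x0\<in>X. PCUE (tag_system X U' x0') (tag_system X U x0))"
  define fans where "fans \<longleftrightarrow> same_fan_systems_PCUE (fan_system X U) (fan_system X U')"
  have "X \<noteq> {}" \<comment> \<open>the only use of the dimension hypotheses\<close>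
    using assms(1,3) by auto
  have "pe \<Longrightarrow> all_tags \<and> all_tags'"
    unfolding pe_def all_tags_def all_tags'_def
    using phase_equivalent_imp_tag_PCUE[OF ub(1) phase_equivalent_sym]
      phase_equivalent_imp_tag_PCUE[OF ub(2)] by (intro conjI)
  moreover have "some_tag \<Longrightarrow> pe"
    unfolding some_tag_def pe_def
    using phase_equivalent_sym[OF tag_PCUE_imp_phase_equivalent[OF ub]] by blast
  moreover have "all_tags \<Longrightarrow> some_tag"
    unfolding all_tags_def some_tag_def using \<open>X \<noteq> {}\<close> by blast
  moreover have "fans \<longleftrightarrow> all_tags \<and> all_tags'"
    unfolding fans_def all_tags_def all_tags'_def by (rule same_fan_systems_PCUE_iff[OF assms(2) ub])
  ultimately have "(pe \<longleftrightarrow> some_tag) \<and> (some_tag \<longleftrightarrow> all_tags) \<and> (all_tags \<longleftrightarrow> fans)"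
    by blast
  then show ?thesis
    unfolding pe_def some_tag_def all_tags_def fans_def .
qed

end
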